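(* Let $u$ be a positive harmonic function on $\mathbf D$ belonging to $\mathcal K$, and let $\mu$ be the finite positive Borel measure on $\mathbf T$ with $u(re^{i\theta})=\int P(re^{i(\theta-\phi)})\,d\mu(e^{i\phi})$, where $P(re^{i\theta})=\frac1{2\pi}\frac{1-r^2}{1-2r\cos\theta+r^2}$. Let $C$ be a constant such that $\mu(I)\le C|I|\log\frac e{|I|}$ for every arc $I\subset\mathbf T$. For $n\ge1$ let $F_n=\{\theta\in[0,2\pi):\ \limsup_{r\to1}\frac{u(re^{i\theta})}{|\log(1-r)|}\ge\frac2n\}$. Then there exists $k>0$ depending only on $C$ and $n$ such that for each $\theta\in F_n$ there exists a decreasing sequence $(\Delta_j)$ with $\Delta_j\to0$ satisfying $$\mu(\theta-\Delta_j,\theta+\Delta_j)\ge k\left(10\Delta_j\log\frac1{10\Delta_j}\right)\quad\text{for all }j.$$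
   Context: $\mathbf D$ is the open unit disc and $\mathbf T$ the unit circle; $|I|$ is arc length. $\mathcal K$ is the class of harmonic functions $u$ on $\mathbf D$ for which there is a constant $C'$ with $u(z)\le C'\log\frac{e}{1-|z|}$ on $\mathbf D$ (for positive $u\in\mathcal K$ the representing measure satisfies $\mu(I)\le C|I|\log\frac e{|I|}$ for some $C$). Notation: $\mu(\alpha,\beta)=\mu(\{e^{i\varphi}:\alpha\le\varphi<\beta\})$. *)

theory Defs
  imports "HOL-Analysis.Analysis"
begin

definition dx :: "(complex \<Rightarrow> real) \<Rightarrow> complex \<Rightarrow> real" where
  "dx u z = deriv (\<lambda>t::real. u (z + of_real t)) 0"

definition dy :: "(complex \<Rightarrow> real) \<Rightarrow> complex \<Rightarrow> real" where
  "dy u z = deriv (\<lambda>t::real. u (z + \<i> * of_real t)) 0"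

definition harmonic_on :: "complex set \<Rightarrow> (complex \<Rightarrow> real) \<Rightarrow> bool" where
  "harmonic_on S u \<longleftrightarrow> open S \<and>
     (\<forall>z\<in>S. u differentiable (at z)) \<and>
     (\<forall>z\<in>S. dx u differentiable (at z) \<and> dy u differentiable (at z)) \<and>
     continuous_on S (dx (dx u)) \<and> continuous_on S (dx (dy u)) \<and>
     continuous_on S (dy (dx u)) \<and> continuous_on S (dy (dy u)) \<and>
     (\<forall>z\<in>S. dx (dx u) z + dy (dy u) z = 0)"

definition poisson :: "real \<Rightarrow> real \<Rightarrow> real" where
  "poisson r t = (1 / (2 * pi)) * ((1 - r\<^sup>2) / (1 - 2 * r * cos t + r\<^sup>2))"

definition classK :: "(complex \<Rightarrow> real) \<Rightarrow> bool" where
  "classK u \<longleftrightarrow> (\<exists>C'. \<forall>z\<in>ball 0 1. u z \<le> C' * ln (exp 1 / (1 - cmod z)))"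

text \<open>mu(alpha, beta) = mu({e^{i phi} : alpha <= phi < beta}).\<close>
definition arc :: "real \<Rightarrow> real \<Rightarrow> complex set" where
  "arc \<alpha> \<beta> = {cis \<phi> | \<phi>. \<alpha> \<le> \<phi> \<and> \<phi> < \<beta>}"

definition Fset :: "(complex \<Rightarrow> real) \<Rightarrow> nat \<Rightarrow> real set" where
  "Fset u n = {\<theta>. 0 \<le> \<theta> \<and> \<theta> < 2 * pi \<and>
     Limsup (at_left 1) (\<lambda>r. ereal (u (of_real r * cis \<theta>) / \<bar>ln (1 - r)\<bar>)) \<ge> ereal (2 / real n)}"

end

theory Submission
  imports Defs
begin

text \<open>
  Suppose \<open>\<mu>(\<theta> - \<delta>, \<theta> + \<delta>) \<le> k \<cdot> 10\<delta> log (1/(10\<delta>))\<close> for all small \<open>\<delta>\<close>, and let \<open>h = 1 - r\<close>.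
  Outside the arc of half-width \<open>2^j h\<close> about \<open>\<theta>\<close> the Poisson kernel is \<open>O(4^-j / h)\<close>, so splitting
  the circle into these dyadic arcs bounds the contribution of the \<open>j\<close>-th arc by
  \<open>O(k 2^-j log (1/h))\<close>; summing, \<open>u(r e^i\<theta>) \<le> 80 k log (1/h) + O(h)\<close>. For \<open>k = 1/(100n)\<close> the
  limsup defining \<open>F\<^sub>n\<close> is then at most \<open>1/n < 2/n\<close>. So for \<open>\<theta> \<in> F\<^sub>n\<close> arbitrarily small \<open>\<delta>\<close>
  violate the assumed bound, and they can be chosen decreasing to \<open>0\<close>.
\<close>

lemma one_minus_cos_ge:
  fixes x :: real
  assumes "\<bar>x\<bar> \<le> 1"
  shows "x\<^sup>2 / 3 \<le> 1 - cos x"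
proof -
  obtain t where t: "cos x = (\<Sum>m<4. cos_coeff m * x ^ m) + cos (t + 1/2 * real 4 * pi) / fact 4 * x ^ 4"
    using Maclaurin_cos_expansion by blast
  have taylor: "(\<Sum>m<4. cos_coeff m * x ^ m) = 1 - x\<^sup>2 / 2"
    by (auto simp add: numeral_eq_Suc cos_coeff_def power2_eq_square; presburger)
  have rest: "cos (t + 1/2 * real 4 * pi) / fact 4 * x ^ 4 \<le> x ^ 4 / 24"
    using mult_right_mono[OF cos_le_one[of "t + 1/2 * real 4 * pi"] zero_le_even_power[of 4 x]]
    by (simp add: fact_numeral divide_right_mono)
  have "x\<^sup>2 * x\<^sup>2 \<le> 1 * x\<^sup>2"
    using assms by (intro mult_right_mono) (auto simp: abs_square_le_1)
  then have "x ^ 4 \<le> x\<^sup>2"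
    by (simp add: power2_eq_square power4_eq_xxxx)
  with t taylor rest show ?thesis
    using zero_le_power2[of x] by linarith
qed

subsection \<open>Bounds for the Poisson kernel\<close>

lemma poisson_denominator:
  fixes r t :: real
  shows "1 - 2 * r * cos t + r\<^sup>2 = (1 - r)\<^sup>2 + 2 * r * (1 - cos t)"
  by (simp add: power2_eq_square algebra_simps)

lemma poisson_le_inverse:
  assumes "1/2 \<le> r" "r < 1"
  shows "poisson r t \<le> 1 / (pi * (1 - r))"
proof -
  have num: "1 - r\<^sup>2 \<le> 2 * (1 - r)"
    using assms zero_le_power2[of "1 - r"] by (simp add: power2_eq_square algebra_simps)
  have "(1 - r\<^sup>2) / ((1 - r)\<^sup>2 + 2 * r * (1 - cos t)) \<le> 2 * (1 - r) / (1 - r)\<^sup>2"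
    using assms num by (intro frac_le) (auto simp: power2_eq_square mult_le_one)
  also have "\<dots> = 2 / (1 - r)"
    using assms by (simp add: power2_eq_square divide_simps)
  finally have "poisson r t \<le> 1 / (2 * pi) * (2 / (1 - r))"
    unfolding poisson_def poisson_denominator by (intro mult_left_mono) auto
  then show ?thesis
    by simp
qed

lemma poisson_le_of_one_minus_cos_ge:
  assumes "1/2 \<le> r" "r < 1" "0 < d" "d \<le> 1 - cos t"
  shows "poisson r t \<le> (1 - r) / (pi * d)"
proof -
  have "d \<le> 2 * r * (1 - cos t)"
    using assms mult_mono[of 1 "2 * r" d "1 - cos t"] by simp
  then have den: "d \<le> (1 - r)\<^sup>2 + 2 * r * (1 - cos t)"
    using zero_le_power2[of "1 - r"] by linarith
  have num: "1 - r\<^sup>2 \<le> 2 * (1 - r)"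
    using assms zero_le_power2[of "1 - r"] by (simp add: power2_eq_square algebra_simps)
  have "(1 - r\<^sup>2) / ((1 - r)\<^sup>2 + 2 * r * (1 - cos t)) \<le> 2 * (1 - r) / d"
    using den num assms by (intro frac_le) (auto simp: power2_eq_square mult_le_one)
  then have "poisson r t \<le> 1 / (2 * pi) * (2 * (1 - r) / d)"
    unfolding poisson_def poisson_denominator by (intro mult_left_mono) auto
  then show ?thesis
    using assms by (simp add: field_simps)
qed

lemma mem_arc_of_cos_gt:
  assumes "cmod z = 1" "0 < \<delta>" "\<delta> < pi" "cos \<delta> < cos (\<theta> - Arg z)"
  shows "z \<in> arc (\<theta> - \<delta>) (\<theta> + \<delta>)"
proof -
  define t where "t = \<theta> - Arg z"
  define m where "m = \<lfloor>(t + pi) / (2 * pi)\<rfloor>"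
  define s where "s = t - 2 * pi * m"
  have "m \<le> (t + pi) / (2 * pi)" "(t + pi) / (2 * pi) < m + 1"
    unfolding m_def by linarith+
  then have s_bounds: "-pi \<le> s" "s < pi"
    unfolding s_def by (auto simp: field_simps)
  have "cos s = cos t"
    unfolding s_def cos_diff using cos_int_2pin[of m] sin_int_2pin[of m] by simp
  then have "cos \<delta> < cos \<bar>s\<bar>"
    using assms t_def by simp
  then have "\<bar>s\<bar> < \<delta>"
    using cos_mono_less_eq[of \<delta> "\<bar>s\<bar>"] s_bounds assms by auto
  moreover have "cis (\<theta> - s) = z"
  proof -
    have "cis (\<theta> - s) = cis (Arg z) * cis (2 * pi * m)"
      unfolding s_def t_def by (simp add: cis_mult del: cis_multiple_2pi)
    also have "\<dots> = z"
      using assms by (subst cis_Arg) (auto simp: sgn_div_norm)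
    finally show ?thesis .
  qed
  ultimately show ?thesis
    unfolding arc_def by (intro CollectI exI[of _ "\<theta> - s"]) auto
qed

lemma arc_subset_sphere: "arc \<alpha> \<beta> \<subseteq> sphere 0 1"
  unfolding arc_def by auto

lemma arc_in_sets_borel: "arc \<alpha> \<beta> \<in> sets borel"
proof -
  have "arc \<alpha> \<beta> = (\<Union>n. cis ` {\<alpha>..\<beta> - 1 / Suc n})"
  proof (intro equalityI subsetI)
    fix z assume "z \<in> arc \<alpha> \<beta>"
    then obtain \<phi> where \<phi>: "z = cis \<phi>" "\<alpha> \<le> \<phi>" "\<phi> < \<beta>"
      unfolding arc_def by auto
    then obtain n :: nat where "1 / (\<beta> - \<phi>) < Suc n"
      using reals_Archimedean2 by (metis less_trans lessI of_nat_less_iff)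
    then have "1 / Suc n \<le> \<beta> - \<phi>"
      using \<phi> by (simp add: divide_less_eq field_simps)
    with \<phi> have "z \<in> cis ` {\<alpha>..\<beta> - 1 / Suc n}"
      by auto
    then show "z \<in> (\<Union>n. cis ` {\<alpha>..\<beta> - 1 / Suc n})"
      by blast
  next
    fix z assume "z \<in> (\<Union>n. cis ` {\<alpha>..\<beta> - 1 / Suc n})"
    then obtain n \<phi> where "z = cis \<phi>" "\<alpha> \<le> \<phi>" "\<phi> \<le> \<beta> - 1 / Suc n"
      by auto
    moreover have "0 < 1 / real (Suc n)"
      by simp
    ultimately have "z = cis \<phi> \<and> \<alpha> \<le> \<phi> \<and> \<phi> < \<beta>"
      by linarith
    then show "z \<in> arc \<alpha> \<beta>"
      unfolding arc_def by blast
  qed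
  moreover have "cis ` {\<alpha>..\<beta> - 1 / Suc n} \<in> sets borel" for n
    by (intro borel_closed compact_imp_closed compact_continuous_image continuous_intros) auto
  ultimately show ?thesis
    by auto
qed

lemma arc_in_sets_sphere:
  assumes "sets M = sets (restrict_space borel (sphere 0 1))"
  shows "arc \<alpha> \<beta> \<in> sets M"
  unfolding assms using arc_in_sets_borel arc_subset_sphere
  by (subst sets_restrict_space_iff) auto

lemma poisson_le_outside_arc:
  assumes "cmod z = 1" "0 < \<delta>" "\<delta> \<le> 1" "1/2 \<le> r" "r < 1"
    and "z \<notin> arc (\<theta> - \<delta>) (\<theta> + \<delta>)"
  shows "poisson r (\<theta> - Arg z) \<le> 3 * (1 - r) / (pi * \<delta>\<^sup>2)"
proof -
  have "\<delta> < pi"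
    using assms pi_gt3 by linarith
  then have "cos (\<theta> - Arg z) \<le> cos \<delta>"
    using mem_arc_of_cos_gt[of z \<delta> \<theta>] assms by force
  then have "\<delta>\<^sup>2 / 3 \<le> 1 - cos (\<theta> - Arg z)"
    using one_minus_cos_ge[of \<delta>] assms by simp
  then have "poisson r (\<theta> - Arg z) \<le> (1 - r) / (pi * (\<delta>\<^sup>2 / 3))"
    using assms by (intro poisson_le_of_one_minus_cos_ge) auto
  then show ?thesis
    by (simp add: field_simps)
qed

subsection \<open>The dyadic decomposition\<close>

lemma power2_two_power_mult:
  fixes h :: real
  shows "(2 ^ j * h)\<^sup>2 = 4 ^ j * h\<^sup>2"
  by (simp add: power_mult_distrib power_mult_distrib[symmetric] power2_eq_square)

lemma poisson_le_dyadic_arcs: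
  assumes "cmod z = 1" "1/2 \<le> r" "r < 1" "2 ^ J * (1 - r) \<le> 1"
  shows "poisson r (\<theta> - Arg z) \<le>
    (\<Sum>j\<le>J. 12 / (pi * (1 - r) * 4 ^ j) * indicator (arc (\<theta> - 2 ^ j * (1 - r)) (\<theta> + 2 ^ j * (1 - r))) z)
    + 3 / (pi * (1 - r) * 4 ^ J)"
  using assms(4)
proof (induction J)
  case 0
  let ?h = "1 - r"
  have h: "0 < ?h"
    using assms by simp
  show ?case
  proof (cases "z \<in> arc (\<theta> - ?h) (\<theta> + ?h)")
    case True
    have "poisson r (\<theta> - Arg z) \<le> 1 / (pi * ?h)"
      using assms poisson_le_inverse by blast
    also have "\<dots> \<le> 15 / (pi * ?h)"
      using h by (simp add: divide_right_mono)
    finally show ?thesis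
      using True by simp
  next
    case False
    have "poisson r (\<theta> - Arg z) \<le> 3 * ?h / (pi * ?h\<^sup>2)"
      using poisson_le_outside_arc[of z ?h r \<theta>] assms 0 False h by simp
    also have "\<dots> = 3 / (pi * ?h)"
      using h by (simp add: power2_eq_square divide_simps)
    finally show ?thesis
      using False by simp
  qed
next
  case (Suc J)
  let ?h = "1 - r"
  let ?S = "\<lambda>J. \<Sum>j\<le>J. 12 / (pi * ?h * 4 ^ j) * indicator (arc (\<theta> - 2 ^ j * ?h) (\<theta> + 2 ^ j * ?h)) z"
  have h: "0 < ?h"
    using assms by simp
  have S_nonneg: "0 \<le> ?S J'" for J'
    using h by (intro sum_nonneg) simp
  show ?case
  proof (cases "z \<in> arc (\<theta> - 2 ^ Suc J * ?h) (\<theta> + 2 ^ Suc J * ?h)")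
    case True
    have "2 ^ J * ?h \<le> 2 ^ Suc J * ?h"
      using h by simp
    then have "poisson r (\<theta> - Arg z) \<le> ?S J + 3 / (pi * ?h * 4 ^ J)"
      using Suc by linarith
    moreover have "?S (Suc J) = ?S J + 12 / (pi * ?h * 4 ^ Suc J)"
      using True by simp
    \<comment> \<open>The remainder term of stage \<open>J\<close> is exactly the new summand.\<close>
    moreover have "3 / (pi * ?h * 4 ^ J) = 12 / (pi * ?h * 4 ^ Suc J)"
      by simp
    moreover have "0 \<le> 3 / (pi * ?h * 4 ^ Suc J)"
      using h by simp
    ultimately show ?thesis
      by linarith
  next
    case False
    have "poisson r (\<theta> - Arg z) \<le> 3 * ?h / (pi * (2 ^ Suc J * ?h)\<^sup>2)"
      using poisson_le_outside_arc[of z "2 ^ Suc J * ?h" r \<theta>] assms Suc.prems False h by simp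
    also have "\<dots> = 3 * ?h / (pi * (4 ^ Suc J * ?h\<^sup>2))"
      by (simp only: power2_two_power_mult)
    also have "\<dots> = 3 / (pi * ?h * 4 ^ Suc J)"
      using h by (simp add: power2_eq_square divide_simps)
    finally show ?thesis
      using S_nonneg[of "Suc J"] by linarith
  qed
qed

lemma exists_dyadic_scale:
  fixes h D :: real
  assumes "0 < h" "h \<le> D"
  shows "\<exists>J::nat. 2 ^ J * h \<le> D \<and> D < 2 ^ Suc J * h"
proof -
  obtain N :: nat where "D / h < 2 ^ N"
    using real_arch_pow[of 2 "D / h"] by auto
  then have ex: "\<exists>N::nat. D < 2 ^ N * h"
    using assms by (auto simp: field_simps)
  define L where "L = (LEAST N::nat. D < 2 ^ N * h)"
  have L: "D < 2 ^ L * h"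
    unfolding L_def by (rule LeastI_ex[OF ex])
  moreover have "L \<noteq> 0"
    using L assms by (intro notI) simp
  ultimately obtain J where J: "L = Suc J"
    using not0_implies_Suc by blast
  then have "\<not> D < 2 ^ J * h"
    using not_less_Least[of J "\<lambda>N. D < 2 ^ N * h"] unfolding L_def by auto
  with \<open>D < 2 ^ L * h\<close> J show ?thesis
    by (intro exI[of _ J]) (simp add: not_less)
qed

lemma poisson_integral_le_dyadic_sum:
  fixes M :: "complex measure"
  assumes sets_M: "sets M = sets (restrict_space borel (sphere 0 1))" and "finite_measure M"
    and "integrable M (\<lambda>\<zeta>. poisson r (\<theta> - Arg \<zeta>))"
    and "1/2 \<le> r" "r < 1" "2 ^ J * (1 - r) \<le> 1"
  shows "(\<integral>\<zeta>. poisson r (\<theta> - Arg \<zeta>) \<partial>M) \<le>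
    (\<Sum>j\<le>J. 12 / (pi * (1 - r) * 4 ^ j) * measure M (arc (\<theta> - 2 ^ j * (1 - r)) (\<theta> + 2 ^ j * (1 - r))))
    + 3 / (pi * (1 - r) * 4 ^ J) * measure M (space M)"
proof -
  define A where "A j = arc (\<theta> - 2 ^ j * (1 - r)) (\<theta> + 2 ^ j * (1 - r))" for j :: nat
  define a where "a j = 12 / (pi * (1 - r) * 4 ^ j)" for j :: nat
  define b where "b = 3 / (pi * (1 - r) * 4 ^ J)"
  have space_M: "space M = sphere 0 1"
    using sets_eq_imp_space_eq[OF sets_M] by (simp add: space_restrict_space)
  have A_inter: "A j \<inter> space M = A j" for j
    unfolding space_M A_def using arc_subset_sphere by auto
  have integrable_A: "integrable M (indicator (A j) :: complex \<Rightarrow> real)" for j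
    using arc_in_sets_sphere[OF sets_M] finite_measure.emeasure_finite[OF assms(2)]
    unfolding A_def by (intro integrable_real_indicator) (auto simp: less_top)
  have integrable_sum: "integrable M (\<lambda>\<zeta>. \<Sum>j\<le>J. a j * indicator (A j) \<zeta>)"
    by (intro Bochner_Integration.integrable_sum integrable_mult_right integrable_A)
  have "(\<integral>\<zeta>. poisson r (\<theta> - Arg \<zeta>) \<partial>M) \<le> (\<integral>\<zeta>. (\<Sum>j\<le>J. a j * indicator (A j) \<zeta>) + b \<partial>M)"
  proof (rule integral_mono)
    show "integrable M (\<lambda>\<zeta>. (\<Sum>j\<le>J. a j * indicator (A j) \<zeta>) + b)"
      by (rule Bochner_Integration.integrable_add[OF integrable_sum finite_measure.integrable_const[OF assms(2)]])
    show "poisson r (\<theta> - Arg z) \<le> (\<Sum>j\<le>J. a j * indicator (A j) z) + b" if "z \<in> space M" for z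
      using that poisson_le_dyadic_arcs[of z r J \<theta>] assms unfolding space_M a_def b_def A_def by simp
  qed (fact assms(3))
  also have "\<dots> = (\<integral>\<zeta>. (\<Sum>j\<le>J. a j * indicator (A j) \<zeta>) \<partial>M) + b * measure M (space M)"
    using Bochner_Integration.integral_add[OF integrable_sum finite_measure.integrable_const[OF assms(2)]]
    by simp
  also have "(\<integral>\<zeta>. (\<Sum>j\<le>J. a j * indicator (A j) \<zeta>) \<partial>M) = (\<Sum>j\<le>J. a j * measure M (A j))"
    using integrable_A by (subst Bochner_Integration.integral_sum) (auto simp: A_inter)
  finally show ?thesis
    unfolding a_def b_def A_def .
qed

lemma dyadic_term_le:
  fixes h k m :: real
  assumes h: "0 < h" "h \<le> 1" and k: "0 \<le> k"
    and m: "m \<le> k * (10 * (2 ^ j * h) * ln (1 / (10 * (2 ^ j * h))))"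
  shows "12 / (pi * h * 4 ^ j) * m \<le> 40 * k * ln (1 / h) * (1/2) ^ j"
proof -
  define d where "d = 2 ^ j * h"
  define L where "L = ln (1 / h)"
  have d: "h \<le> d"
    using h unfolding d_def by simp
  have L: "0 \<le> L"
    unfolding L_def using h by simp
  have "ln (1 / (10 * d)) \<le> L"
    unfolding L_def using d h by (subst ln_le_cancel_iff) (auto simp: field_simps)
  then have "m \<le> k * (10 * d * L)"
    using m k d h unfolding d_def by (smt (verit) mult_left_mono mult_nonneg_nonneg)
  then have "12 / (pi * h * 4 ^ j) * m \<le> 12 / (pi * h * 4 ^ j) * (k * (10 * d * L))"
    using h by (intro mult_left_mono) auto
  also have "\<dots> = 120 / pi * (k * L * (1/2) ^ j)"
    unfolding d_def using h by (simp add: field_simps flip: power_mult_distrib)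
  also have "\<dots> \<le> 40 * (k * L * (1/2) ^ j)"
    using pi_gt3 k L by (intro mult_right_mono) (auto simp: divide_simps)
  finally show ?thesis
    unfolding L_def by simp
qed

lemma dyadic_tail_le:
  fixes h D :: real
  assumes "0 < h" "0 < D" "D < 2 ^ Suc J * h"
  shows "3 / (pi * h * 4 ^ J) \<le> 4 * h / D\<^sup>2"
proof -
  have "D\<^sup>2 < (2 ^ Suc J * h)\<^sup>2"
    using assms by (intro power_strict_mono) auto
  also have "\<dots> = 4 * 4 ^ J * h\<^sup>2"
    by (simp only: power2_two_power_mult) simp
  finally have D: "D\<^sup>2 < 4 * 4 ^ J * h\<^sup>2" .
  have "3 / (pi * h * 4 ^ J) \<le> 1 / (h * 4 ^ J)"
    using pi_gt3 assms by (simp add: divide_simps)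
  also have "\<dots> \<le> 4 * h / D\<^sup>2"
    using D assms by (simp add: field_simps power2_eq_square)
  finally show ?thesis .
qed

lemma poisson_integral_le_log:
  fixes M :: "complex measure"
  assumes sets_M: "sets M = sets (restrict_space borel (sphere 0 1))" and finite_M: "finite_measure M"
    and integrable: "integrable M (\<lambda>\<zeta>. poisson r (\<theta> - Arg \<zeta>))"
    and r: "r < 1" "1 - r \<le> D" and D: "D \<le> 1/2" and k: "0 \<le> k"
    and small_arcs: "\<And>\<delta>. 0 < \<delta> \<Longrightarrow> \<delta> \<le> D \<Longrightarrow>
      measure M (arc (\<theta> - \<delta>) (\<theta> + \<delta>)) \<le> k * (10 * \<delta> * ln (1 / (10 * \<delta>)))"
  shows "(\<integral>\<zeta>. poisson r (\<theta> - Arg \<zeta>) \<partial>M)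
    \<le> 80 * k * ln (1 / (1 - r)) + 4 * (1 - r) * measure M (space M) / D\<^sup>2"
proof -
  define h where "h = 1 - r"
  define L where "L = ln (1 / h)"
  have h: "0 < h" "h \<le> D"
    using r unfolding h_def by auto
  have L: "0 \<le> L"
    unfolding L_def using h D by simp
  obtain J where J: "2 ^ J * h \<le> D" "D < 2 ^ Suc J * h"
    using exists_dyadic_scale[OF h] by blast
  define A where "A j = arc (\<theta> - 2 ^ j * h) (\<theta> + 2 ^ j * h)" for j :: nat
  have "(\<integral>\<zeta>. poisson r (\<theta> - Arg \<zeta>) \<partial>M)
      \<le> (\<Sum>j\<le>J. 12 / (pi * h * 4 ^ j) * measure M (A j)) + 3 / (pi * h * 4 ^ J) * measure M (space M)"
    using poisson_integral_le_dyadic_sum[OF sets_M finite_M integrable, of J] r J D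
    unfolding A_def h_def by simp
  also have "(\<Sum>j\<le>J. 12 / (pi * h * 4 ^ j) * measure M (A j)) \<le> (\<Sum>j\<le>J. 40 * k * L * (1/2) ^ j)"
  proof (rule sum_mono)
    fix j assume "j \<in> {..J}"
    then have "2 ^ j * h \<le> D"
      using J h by (meson atMost_iff mult_right_mono one_le_numeral order.trans power_increasing less_imp_le)
    then show "12 / (pi * h * 4 ^ j) * measure M (A j) \<le> 40 * k * L * (1/2) ^ j"
      unfolding A_def L_def using h D k small_arcs by (intro dyadic_term_le) auto
  qed
  also have "(\<Sum>j\<le>J. 40 * k * L * (1/2::real) ^ j) \<le> 80 * k * L"
  proof -
    have "(\<Sum>j\<le>J. (1/2::real) ^ j) = 2 - (1/2) ^ J"
      by (induction J) auto
    then have "(\<Sum>j\<le>J. 40 * k * L * (1/2::real) ^ j) = 40 * k * L * (2 - (1/2) ^ J)"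
      by (simp add: sum_distrib_left[symmetric])
    also have "\<dots> \<le> 40 * k * L * 2"
      using k L by (intro mult_left_mono) auto
    finally show ?thesis
      by simp
  qed
  also have "3 / (pi * h * 4 ^ J) \<le> 4 * h / D\<^sup>2"
    using h J by (intro dyadic_tail_le) auto
  finally show ?thesis
    unfolding L_def h_def by (simp add: mult_right_mono)
qed

lemma ratio_eventually_le:
  fixes M :: "complex measure" and u :: "complex \<Rightarrow> real"
  assumes u_pos: "\<forall>z\<in>ball 0 1. u z > 0"
    and sets_M: "sets M = sets (restrict_space borel (sphere 0 1))" and finite_M: "finite_measure M"
    and poisson_repr: "\<forall>r \<theta>. 0 \<le> r \<and> r < 1 \<longrightarrow> u (of_real r * cis \<theta>) = (\<integral>\<zeta>. poisson r (\<theta> - Arg \<zeta>) \<partial>M)"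
    and D: "0 < D" "D \<le> 1/2" and k: "0 \<le> k" and \<epsilon>: "0 < \<epsilon>"
    and small_arcs: "\<And>\<delta>. 0 < \<delta> \<Longrightarrow> \<delta> \<le> D \<Longrightarrow>
      measure M (arc (\<theta> - \<delta>) (\<theta> + \<delta>)) \<le> k * (10 * \<delta> * ln (1 / (10 * \<delta>)))"
  shows "\<forall>\<^sub>F r in at_left 1. u (of_real r * cis \<theta>) / \<bar>ln (1 - r)\<bar> \<le> 80 * k + \<epsilon>"
proof -
  define T where "T = measure M (space M)"
  define \<eta> where "\<eta> = min D (min (exp (-1)) (\<epsilon> * D\<^sup>2 / (4 * (T + 1))))"
  have T: "0 \<le> T"
    unfolding T_def by simp
  have "0 < \<eta>"
    unfolding \<eta>_def using D \<epsilon> T by auto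
  then have "\<forall>\<^sub>F r in at_left 1. 1 - \<eta> < r \<and> r < 1"
    using eventually_at_left_real[of "1 - \<eta>" 1] by simp
  then show ?thesis
  proof (rule eventually_mono)
    fix r assume r: "1 - \<eta> < r \<and> r < 1"
    define h where "h = 1 - r"
    define L where "L = ln (1 / h)"
    have h: "0 < h" "h \<le> D" "h \<le> exp (-1)" "h \<le> \<epsilon> * D\<^sup>2 / (4 * (T + 1))"
      using r unfolding h_def \<eta>_def by auto
    have "of_real r * cis \<theta> \<in> ball 0 1"
      using r h D unfolding h_def by (simp add: norm_mult)
    moreover have u_eq: "u (of_real r * cis \<theta>) = (\<integral>\<zeta>. poisson r (\<theta> - Arg \<zeta>) \<partial>M)"
      using poisson_repr r h D unfolding h_def by simp
    \<comment> \<open>A non-integrable kernel would make the Bochner integral, hence \<open>u\<close>, vanish.\<close>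
    ultimately have "integrable M (\<lambda>\<zeta>. poisson r (\<theta> - Arg \<zeta>))"
      using u_pos not_integrable_integral_eq by force
    then have u_le: "u (of_real r * cis \<theta>) \<le> 80 * k * L + 4 * h * T / D\<^sup>2"
      using poisson_integral_le_log[OF sets_M finite_M _ _ _ _ k small_arcs] r h D u_eq
      unfolding h_def L_def T_def by simp
    have L: "1 \<le> L"
      using h ln_le_cancel_iff[of h "exp (-1)"] unfolding L_def by (simp add: ln_div)
    have abs_ln: "\<bar>ln (1 - r)\<bar> = L"
      using h L unfolding L_def h_def by (simp add: ln_div)
    have "4 * h * T \<le> \<epsilon> * D\<^sup>2 * (T / (T + 1))"
      using mult_right_mono[OF h(4) T] T by (simp add: field_simps)
    also have "\<dots> \<le> \<epsilon> * D\<^sup>2"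
      using T \<epsilon> mult_left_mono[of "T / (T + 1)" 1 "\<epsilon> * D\<^sup>2"] by simp
    finally have "4 * h * T / D\<^sup>2 \<le> \<epsilon>"
      using D by (simp add: divide_simps mult.commute)
    moreover have "4 * h * T / D\<^sup>2 / L \<le> 4 * h * T / D\<^sup>2 / 1"
      using h T L by (intro divide_left_mono) auto
    moreover have "u (of_real r * cis \<theta>) / L \<le> (80 * k * L + 4 * h * T / D\<^sup>2) / L"
      using u_le L by (intro divide_right_mono) auto
    moreover have "(80 * k * L + 4 * h * T / D\<^sup>2) / L = 80 * k + 4 * h * T / D\<^sup>2 / L"
      using L by (simp add: add_divide_distrib)
    ultimately show "u (of_real r * cis \<theta>) / \<bar>ln (1 - r)\<bar> \<le> 80 * k + \<epsilon>"
      unfolding abs_ln by linarith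
  qed
qed

lemma decseq_in_set_tendsto_0:
  fixes S :: "real set"
  assumes "S \<subseteq> {0<..}" "\<And>\<epsilon>. 0 < \<epsilon> \<Longrightarrow> \<exists>\<delta>\<in>S. \<delta> \<le> \<epsilon>"
  shows "\<exists>\<Delta>. decseq \<Delta> \<and> (\<forall>j. \<Delta> j \<in> S) \<and> \<Delta> \<longlonglongrightarrow> 0"
proof -
  obtain f where f: "\<And>\<epsilon>. 0 < \<epsilon> \<Longrightarrow> f \<epsilon> \<in> S \<and> f \<epsilon> \<le> \<epsilon>"
    using assms(2) by metis
  define \<Delta> where "\<Delta> = rec_nat (f 1) (\<lambda>j d. f (min d (inverse (real (Suc (Suc j))))))"
  have \<Delta>_Suc: "\<Delta> (Suc j) = f (min (\<Delta> j) (inverse (real (Suc (Suc j)))))" for j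
    unfolding \<Delta>_def by simp
  have \<Delta>: "\<Delta> j \<in> S \<and> \<Delta> j \<le> inverse (real (Suc j))" for j
  proof (induction j)
    case 0
    then show ?case
      using f[of 1] unfolding \<Delta>_def by simp
  next
    case (Suc j)
    then show ?case
      using f[of "min (\<Delta> j) (inverse (real (Suc (Suc j))))"] assms(1) \<Delta>_Suc[of j] by auto
  qed
  have "\<Delta> (Suc j) \<le> \<Delta> j" for j
    using f[of "min (\<Delta> j) (inverse (real (Suc (Suc j))))"] \<Delta>[of j] assms(1) \<Delta>_Suc[of j] by auto
  have "\<Delta> \<longlonglongrightarrow> 0"
  proof (rule tendsto_sandwich[of "\<lambda>_. 0" _ _ "\<lambda>j. inverse (real (Suc j))"])
    have "0 < \<Delta> j" for j
      using \<Delta>[of j] assms(1) by auto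
    then show "\<forall>\<^sub>F j in sequentially. 0 \<le> \<Delta> j"
      by (simp add: less_imp_le)
  qed (use \<Delta> LIMSEQ_inverse_real_of_nat in auto)
  with \<Delta> \<open>\<And>j. \<Delta> (Suc j) \<le> \<Delta> j\<close> show ?thesis
    by (auto intro: decseq_SucI)
qed

lemma heavy_arcs_sequence:
  fixes M :: "complex measure" and u :: "complex \<Rightarrow> real"
  assumes n: "n \<ge> 1" and u_pos: "\<forall>z\<in>ball 0 1. u z > 0"
    and sets_M: "sets M = sets (restrict_space borel (sphere 0 1))" and finite_M: "finite_measure M"
    and poisson_repr: "\<forall>r \<theta>. 0 \<le> r \<and> r < 1 \<longrightarrow> u (of_real r * cis \<theta>) = (\<integral>\<zeta>. poisson r (\<theta> - Arg \<zeta>) \<partial>M)"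
    and \<theta>: "\<theta> \<in> Fset u n"
  shows "\<exists>\<Delta>. decseq \<Delta> \<and> (\<forall>j. \<Delta> j > 0) \<and> \<Delta> \<longlonglongrightarrow> 0 \<and>
    (\<forall>j. measure M (arc (\<theta> - \<Delta> j) (\<theta> + \<Delta> j)) \<ge> 1 / (100 * real n) * (10 * \<Delta> j * ln (1 / (10 * \<Delta> j))))"
proof -
  define k where "k = 1 / (100 * real n)"
  define S where "S = {\<delta>. 0 < \<delta> \<and> k * (10 * \<delta> * ln (1 / (10 * \<delta>))) \<le> measure M (arc (\<theta> - \<delta>) (\<theta> + \<delta>))}"
  have "\<exists>\<delta>\<in>S. \<delta> \<le> \<epsilon>" if "0 < \<epsilon>" for \<epsilon>
  proof (rule ccontr)
    assume "\<not> (\<exists>\<delta>\<in>S. \<delta> \<le> \<epsilon>)"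
    then have small_arcs: "measure M (arc (\<theta> - \<delta>) (\<theta> + \<delta>)) \<le> k * (10 * \<delta> * ln (1 / (10 * \<delta>)))"
      if "0 < \<delta>" "\<delta> \<le> min \<epsilon> (1/2)" for \<delta>
      using that unfolding S_def by force
    have "\<forall>\<^sub>F r in at_left 1. u (of_real r * cis \<theta>) / \<bar>ln (1 - r)\<bar> \<le> 80 * k + 1 / (5 * real n)"
      using u_pos sets_M finite_M poisson_repr \<open>0 < \<epsilon>\<close> n small_arcs unfolding k_def
      by (intro ratio_eventually_le[where M = M and D = "min \<epsilon> (1/2)"]) auto
    then have "Limsup (at_left 1) (\<lambda>r. ereal (u (of_real r * cis \<theta>) / \<bar>ln (1 - r)\<bar>)) \<le> ereal (1 / real n)"
      unfolding k_def by (intro Limsup_bounded) (auto elim: eventually_mono)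
    moreover have "ereal (2 / real n) \<le> Limsup (at_left 1) (\<lambda>r. ereal (u (of_real r * cis \<theta>) / \<bar>ln (1 - r)\<bar>))"
      using \<theta> unfolding Fset_def by simp
    ultimately show False
      using n by (auto simp: divide_simps dest: order.trans)
  qed
  then obtain \<Delta> where "decseq \<Delta>" "\<forall>j. \<Delta> j \<in> S" "\<Delta> \<longlonglongrightarrow> 0"
    using decseq_in_set_tendsto_0[of S] unfolding S_def by auto
  then show ?thesis
    unfolding S_def k_def by auto
qed

theorem lemma12:
  fixes C :: real and n :: nat
  assumes "n \<ge> 1"
  shows "\<exists>k>0. \<forall>(u :: complex \<Rightarrow> real) (M :: complex measure).
    harmonic_on (ball 0 1) u \<and> (\<forall>z\<in>ball 0 1. u z > 0) \<and> classK u \<and>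
    sets M = sets (restrict_space borel (sphere 0 1)) \<and> finite_measure M \<and>
    (\<forall>r \<theta>. 0 \<le> r \<and> r < 1 \<longrightarrow>
        u (of_real r * cis \<theta>) = (\<integral>\<zeta>. poisson r (\<theta> - Arg \<zeta>) \<partial>M)) \<and>
    (\<forall>\<alpha> \<beta>. 0 < \<beta> - \<alpha> \<and> \<beta> - \<alpha> \<le> 1 \<longrightarrow>
        measure M (arc \<alpha> \<beta>) \<le> C * (\<beta> - \<alpha>) * ln (exp 1 / (\<beta> - \<alpha>)))
    \<longrightarrow> (\<forall>\<theta>\<in>Fset u n. \<exists>\<Delta> :: nat \<Rightarrow> real.
          decseq \<Delta> \<and> (\<forall>j. \<Delta> j > 0) \<and> \<Delta> \<longlonglongrightarrow> 0 \<and>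
          (\<forall>j. measure M (arc (\<theta> - \<Delta> j) (\<theta> + \<Delta> j))
                 \<ge> k * (10 * \<Delta> j * ln (1 / (10 * \<Delta> j)))))"
proof -
  have "0 < 1 / (100 * real n)"
    using assms by simp
  then show ?thesis
    using heavy_arcs_sequence[OF assms] by blast
qed

end
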